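(* Let $\xi_1,\xi_2,\ldots$ be independent, identically distributed, centered real random variables with finite non-zero variance, and put $\xi=\xi_1$ and $S_n = n^{-1/2}\sum_{i=1}^n \xi_i$. Let $g:[0,\infty)\to[0,\infty)$ be a continuous, strictly convex function, positive on $(0,\infty)$, with $\lim_{t\to\infty} g(t)/t=\infty$, $g(0)=g'(0)=0$ and $g''(0)\in(0,\infty)$. Suppose that $$\mathbf{P}(|\xi|>t)\le \exp(-g(t))\quad\text{for all } t\ge 0 .$$ Then there is a constant $C_1\in(0,\infty)$, not depending on $n$ or $t$, such that for all $n\ge 1$ and all $t>0$, $$\max\left\{\mathbf{P}(S_n>t),\ \mathbf{P}(S_n<-t)\right\}\le \exp\left[-n\, g\!\left(\frac{t}{C_1\sqrt{n}}\right)\right],$$ and consequently $$\mathbf{P}(|S_n|>t)\le 2\exp\left[-n\, g\!\left(\frac{t}{C_1\sqrt{n}}\right)\right].$$ *)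

theory Defs
  imports "HOL-Probability.Probability"
begin

definition strict_convex_on :: "real set \<Rightarrow> (real \<Rightarrow> real) \<Rightarrow> bool" where
  "strict_convex_on S f \<longleftrightarrow> convex S \<and>
     (\<forall>x\<in>S. \<forall>y\<in>S. \<forall>u::real. x \<noteq> y \<and> 0 < u \<and> u < 1 \<longrightarrow>
        f ((1 - u) * x + u * y) < (1 - u) * f x + u * f y)"

end

(*
  Chernoff's method with the exponent mu = 2 g(v) / (C v), chosen so that
  E exp (+-mu xi) <= exp (g v) for every v > 0.  If g v >= 4, sum the tail bound
  over the layers (j + 1) v < |xi| <= (j + 2) v, using g ((j + 1) v) >= (j + 1) g v
  (convexity and g 0 = 0): the series is dominated by a geometric one.  If g v < 4,
  then g v <= B v^2 (near 0 since g' 0 = 0 and g'' 0 exists, and for v bounded away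
  from 0 since g v < 4), so mu <= 1 and exp y <= 1 + y + y^2 exp |y| gives
  E exp (mu xi) <= exp (mu^2 E[xi^2 exp |xi|]),
  which is at most exp (g v) once C^2 >= 4 B (4 + E[xi^2 exp |xi|]).  With
  v = t / (C sqrt n) we have mu t sqrt n = 2 n g v, so independence turns the
  Markov bound for exp (mu sqrt n S_n) into P(+-S_n > t) <= exp (-2 n g v + n g v).
*)
theory Submission
  imports Defs
begin

lemma strict_convex_on_scale_ge:
  fixes g :: "real \<Rightarrow> real"
  assumes g: "strict_convex_on {0..} g" and g0: "g 0 = 0" and "x \<ge> 0" and "k \<ge> 1"
  shows "k * g x \<le> g (k * x)"
proof (cases "k = 1 \<or> x = 0")
  case True
  then show ?thesis using g0 by auto
next
  case False
  with assms have k: "k > 1" and "x > 0" by auto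
  then have "g ((1 - 1/k) * 0 + (1/k) * (k * x)) < (1 - 1/k) * g 0 + (1/k) * g (k * x)"
    by (intro g[unfolded strict_convex_on_def, THEN conjunct2, rule_format]) auto
  with k g0 show ?thesis by (simp add: field_simps)
qed

lemma exp_upper_Taylor_quadratic: "exp x \<le> 1 + x + x\<^sup>2 * exp \<bar>x\<bar>" for x :: real
proof -
  have "exp x - 1 \<le> x * exp x"
    using exp_ge_add_one_self[of "-x"] by (simp add: exp_minus field_simps)
  moreover have "x \<le> exp x - 1"
    using exp_ge_add_one_self[of x] by linarith
  ultimately have "exp x - 1 - x \<le> x * (exp x - 1)"
    by (simp add: algebra_simps)
  also have "x * (exp x - 1) \<le> x\<^sup>2 * exp \<bar>x\<bar>"
  proof (cases "x \<ge> 0")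
    case True
    then show ?thesis
      using \<open>exp x - 1 \<le> x * exp x\<close> mult_left_mono by (fastforce simp: power2_eq_square)
  next
    case False
    then have "x * (exp x - 1) \<le> x * x"
      using \<open>x \<le> exp x - 1\<close> by (intro mult_left_mono_neg) auto
    also have "\<dots> \<le> x\<^sup>2 * exp \<bar>x\<bar>"
      using mult_left_mono[of 1 "exp \<bar>x\<bar>" "x * x"] by (simp add: power2_eq_square)
    finally show ?thesis .
  qed
  finally show ?thesis by simp
qed

lemma exp_div_16_plus_1_le_exp:
  fixes y :: real assumes "y \<ge> 4" shows "exp (y / 16) + 1 \<le> exp y"
proof -
  have "1 \<le> exp (y / 16)" and "1 \<le> 15 * y / 16"
    using assms by auto
  then have "1 \<le> exp (y / 16) * (15 * y / 16)"
    using mult_mono[of 1 "exp (y / 16)" 1 "15 * y / 16"] by simp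
  also have "\<dots> \<le> exp (y / 16) * (exp (15 * y / 16) - 1)"
    using exp_ge_add_one_self[of "15 * y / 16"] by (intro mult_left_mono) (linarith, simp)
  also have "\<dots> = exp y - exp (y / 16)"
    by (simp add: algebra_simps flip: exp_add)
  finally show ?thesis by simp
qed

lemma quadratic_bound_near_zero:
  fixes g g' :: "real \<Rightarrow> real"
  assumes "\<delta> > 0"
    and g_deriv: "\<And>t. t \<in> {0..<\<delta>} \<Longrightarrow> (g has_real_derivative g' t) (at t within {0..})"
    and g'_deriv: "(g' has_real_derivative c) (at 0 within {0..})"
    and "g 0 = 0" and "g' 0 = 0"
  shows "\<exists>d>0. \<exists>B>0. \<forall>v. 0 < v \<and> v < d \<longrightarrow> g v \<le> B * v\<^sup>2"
proof -
  define B where "B = \<bar>c\<bar> + 1"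
  have "((\<lambda>y. (g' y - g' 0) / (y - 0)) \<longlongrightarrow> c) (at 0 within {0..})"
    using g'_deriv by (simp add: has_field_derivative_iff)
  then have "eventually (\<lambda>y. (g' y - g' 0) / (y - 0) < B) (at 0 within {0..})"
    by (rule order_tendstoD) (simp add: B_def)
  then obtain d where "d > 0"
    and slope: "\<And>y. y \<in> {0..} \<Longrightarrow> y \<noteq> 0 \<Longrightarrow> dist y 0 < d \<Longrightarrow> (g' y - g' 0) / (y - 0) < B"
    unfolding eventually_at by blast
  have "g v \<le> B * v\<^sup>2" if v: "0 < v" "v < min \<delta> d" for v
  proof -
    have "\<exists>z\<in>{0<..<v}. g v - g 0 = g' z * (v - 0)"
    proof (rule mvt_simple[OF \<open>0 < v\<close>])
      fix x assume "0 \<le> x" "x \<le> v"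
      with v have "(g has_real_derivative g' x) (at x within {0..})"
        by (intro g_deriv) auto
      then show "(g has_derivative (*) (g' x)) (at x within {0..v})"
        by (auto simp: has_field_derivative_def intro: has_derivative_subset)
    qed
    then obtain z where z: "0 < z" "z < v" and mvt: "g v = g' z * v"
      using \<open>g 0 = 0\<close> by auto
    have "g' z < B * z"
      using slope[of z] z v \<open>g' 0 = 0\<close> by (simp add: divide_less_eq)
    then have "g' z * v \<le> B * z * v"
      using v by (intro mult_right_mono) auto
    also have "\<dots> \<le> B * v * v"
      using z v by (intro mult_right_mono mult_left_mono) (auto simp: B_def)
    also have "\<dots> = B * v\<^sup>2"
      by (simp add: power2_eq_square)
    finally show ?thesis by (simp add: mvt)
  qed
  moreover have "min \<delta> d > 0" "B > 0"
    using \<open>\<delta> > 0\<close> \<open>d > 0\<close> by (auto simp: B_def)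
  ultimately show ?thesis by blast
qed

lemma quadratic_bound_below_level:
  fixes g :: "real \<Rightarrow> real"
  assumes "d > 0" and near_zero: "\<And>v. 0 < v \<Longrightarrow> v < d \<Longrightarrow> g v \<le> B * v\<^sup>2"
    and "L \<ge> 0" and "v > 0" and "g v < L"
  shows "g v \<le> max B (L / d\<^sup>2) * v\<^sup>2"
proof (cases "v < d")
  case True
  then have "g v \<le> B * v\<^sup>2"
    using near_zero \<open>v > 0\<close> by simp
  also have "\<dots> \<le> max B (L / d\<^sup>2) * v\<^sup>2"
    by (intro mult_right_mono) auto
  finally show ?thesis .
next
  case False
  then have "L \<le> L / d\<^sup>2 * v\<^sup>2"
    using \<open>d > 0\<close> \<open>L \<ge> 0\<close> by (simp add: field_simps power_mono mult_left_mono)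
  also have "\<dots> \<le> max B (L / d\<^sup>2) * v\<^sup>2"
    by (intro mult_right_mono) auto
  finally show ?thesis using \<open>g v < L\<close> by simp
qed

lemma (in prob_space) nn_integral_exp_abs_le_tail_sum:
  fixes Y :: "'a \<Rightarrow> real"
  assumes [measurable]: "Y \<in> borel_measurable M" and "a \<ge> 0" and "w > 0"
    and tail: "\<And>t. t \<ge> 0 \<Longrightarrow> prob {x\<in>space M. \<bar>Y x\<bar> > t} \<le> T t"
  shows "(\<integral>\<^sup>+x. exp (a * \<bar>Y x\<bar>) \<partial>M)
    \<le> exp (a * w) + (\<Sum>j. ennreal (exp (a * ((real j + 2) * w)) * T ((real j + 1) * w)))"
proof -
  define A where "A j = {x\<in>space M. \<bar>Y x\<bar> > (real j + 1) * w}" for j :: nat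
  have A[measurable]: "A j \<in> sets M" for j
    unfolding A_def by measurable
  have pointwise: "ennreal (exp (a * \<bar>Y x\<bar>))
      \<le> exp (a * w) + (\<Sum>j. ennreal (exp (a * ((real j + 2) * w))) * indicator (A j) x)"
    if x: "x \<in> space M" for x
  proof (cases "\<bar>Y x\<bar> \<le> w")
    case True
    then have "ennreal (exp (a * \<bar>Y x\<bar>)) \<le> exp (a * w)"
      using \<open>a \<ge> 0\<close> by (intro ennreal_leI) (simp add: mult_left_mono)
    then show ?thesis by (rule order_trans) simp
  next
    case False
    define k where "k = nat (\<lceil>\<bar>Y x\<bar> / w\<rceil> - 2)"
    have "\<lceil>\<bar>Y x\<bar> / w\<rceil> \<ge> 2"
      using False \<open>w > 0\<close> by (simp add: le_ceiling_iff field_simps)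
    then have k: "real k + 2 = of_int \<lceil>\<bar>Y x\<bar> / w\<rceil>"
      by (simp add: k_def)
    have "real k + 1 < \<bar>Y x\<bar> / w" and "\<bar>Y x\<bar> / w \<le> real k + 2"
      using k ceiling_correct[of "\<bar>Y x\<bar> / w"] by linarith+
    then have "(real k + 1) * w < \<bar>Y x\<bar>" and "\<bar>Y x\<bar> \<le> (real k + 2) * w"
      using \<open>w > 0\<close> by (simp_all add: field_simps)
    then have "ennreal (exp (a * \<bar>Y x\<bar>)) \<le> ennreal (exp (a * ((real k + 2) * w))) * indicator (A k) x"
      using x \<open>a \<ge> 0\<close> by (auto simp: A_def intro!: ennreal_leI mult_left_mono)
    also have "\<dots> \<le> (\<Sum>j. ennreal (exp (a * ((real j + 2) * w))) * indicator (A j) x)"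
      using ennreal_suminf_lessD not_le by blast
    finally show ?thesis by (rule order_trans) simp
  qed
  have "(\<integral>\<^sup>+x. exp (a * \<bar>Y x\<bar>) \<partial>M)
      \<le> (\<integral>\<^sup>+x. exp (a * w) + (\<Sum>j. ennreal (exp (a * ((real j + 2) * w))) * indicator (A j) x) \<partial>M)"
    by (intro nn_integral_mono pointwise)
  also have "\<dots> = exp (a * w) + (\<Sum>j. ennreal (exp (a * ((real j + 2) * w))) * emeasure M (A j))"
    by (simp add: nn_integral_add nn_integral_suminf nn_integral_cmult_indicator emeasure_space_1)
  also have "\<dots> \<le> exp (a * w) + (\<Sum>j. ennreal (exp (a * ((real j + 2) * w)) * T ((real j + 1) * w)))"
  proof (intro add_mono order_refl suminf_le)
    fix j
    have "emeasure M (A j) \<le> T ((real j + 1) * w)"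
      unfolding emeasure_eq_measure A_def using \<open>w > 0\<close> by (intro ennreal_leI tail) simp
    then show "ennreal (exp (a * ((real j + 2) * w))) * emeasure M (A j)
        \<le> ennreal (exp (a * ((real j + 2) * w)) * T ((real j + 1) * w))"
      by (simp add: ennreal_mult' mult_left_mono)
  qed auto
  finally show ?thesis .
qed

lemma (in prob_space) nn_integral_exp_abs_le_exp_g_large:
  fixes Y :: "'a \<Rightarrow> real" and g :: "real \<Rightarrow> real"
  assumes [measurable]: "Y \<in> borel_measurable M"
    and tail: "\<And>t. t \<ge> 0 \<Longrightarrow> prob {x\<in>space M. \<bar>Y x\<bar> > t} \<le> exp (- g t)"
    and g_scale: "\<And>k x. k \<ge> 1 \<Longrightarrow> x \<ge> 0 \<Longrightarrow> k * g x \<le> g (k * x)"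
    and "v > 0" and "g v \<ge> 4" and "\<mu> \<ge> 0" and \<mu>: "\<mu> * v \<le> g v / 16"
  shows "(\<integral>\<^sup>+x. exp (\<mu> * \<bar>Y x\<bar>) \<partial>M) \<le> exp (g v)"
proof -
  have term_le: "exp (\<mu> * ((real j + 2) * v)) * exp (- g ((real j + 1) * v)) \<le> exp (-2) * exp (-2) ^ j"
    for j :: nat
  proof -
    have "\<mu> * ((real j + 2) * v) \<le> (real j + 2) * (g v / 16)"
      using \<mu> by (simp add: mult.left_commute mult_left_mono)
    moreover have "(real j + 1) * g v \<le> g ((real j + 1) * v)"
      using \<open>v > 0\<close> by (intro g_scale) auto
    ultimately have "\<mu> * ((real j + 2) * v) - g ((real j + 1) * v)
        \<le> (real j + 2) * (g v / 16) - (real j + 1) * g v"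
      by linarith
    also have "\<dots> = - ((15 * real j + 14) * g v) / 16"
      by (simp add: field_simps)
    also have "\<dots> \<le> - ((15 * real j + 14) * 4) / 16"
      using \<open>g v \<ge> 4\<close> by (intro divide_right_mono le_imp_neg_le mult_left_mono) auto
    also have "\<dots> \<le> -2 + real j * (-2)"
      by simp
    finally show ?thesis
      by (simp add: exp_of_nat_mult[symmetric] mult.commute flip: exp_add exp_diff)
  qed
  have "exp (-2 :: real) \<le> 1 / 2"
    using exp_ge_add_one_self[of 2] by (simp add: exp_minus field_simps)
  then have geometric: "(\<Sum>j. exp (-2) * exp (-2 :: real) ^ j) \<le> 1"
    by (simp add: suminf_mult summable_geometric suminf_geometric field_simps)
  have "(\<integral>\<^sup>+x. exp (\<mu> * \<bar>Y x\<bar>) \<partial>M)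
      \<le> exp (\<mu> * v) + (\<Sum>j. ennreal (exp (\<mu> * ((real j + 2) * v)) * exp (- g ((real j + 1) * v))))"
    by (rule nn_integral_exp_abs_le_tail_sum) (use assms in auto)
  also have "\<dots> \<le> exp (g v / 16) + (\<Sum>j. ennreal (exp (-2) * exp (-2) ^ j))"
    using \<mu> by (intro add_mono suminf_le ennreal_leI term_le) auto
  also have "\<dots> = exp (g v / 16) + ennreal (\<Sum>j. exp (-2) * exp (-2) ^ j)"
    by (subst suminf_ennreal2) (auto intro!: summable_mult summable_geometric)
  also have "\<dots> \<le> ennreal (exp (g v / 16) + 1)"
    using geometric by (simp add: ennreal_plus ennreal_leI add_left_mono)
  also have "\<dots> \<le> exp (g v)"
    using exp_div_16_plus_1_le_exp[OF \<open>g v \<ge> 4\<close>] by (rule ennreal_leI)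
  finally show ?thesis .
qed

lemma (in prob_space) integrable_exp_abs:
  fixes Y :: "'a \<Rightarrow> real" and g :: "real \<Rightarrow> real"
  assumes [measurable]: "Y \<in> borel_measurable M"
    and tail: "\<And>t. t \<ge> 0 \<Longrightarrow> prob {x\<in>space M. \<bar>Y x\<bar> > t} \<le> exp (- g t)"
    and g_scale: "\<And>k x. k \<ge> 1 \<Longrightarrow> x \<ge> 0 \<Longrightarrow> k * g x \<le> g (k * x)"
    and g_super: "filterlim (\<lambda>t. g t / t) at_top at_top"
    and "a \<ge> 0"
  shows "integrable M (\<lambda>x. exp (a * \<bar>Y x\<bar>))"
proof -
  have "eventually (\<lambda>t. max 4 (16 * a) \<le> g t / t) at_top"
    using g_super unfolding filterlim_at_top by blast
  then obtain N where N: "\<And>t. t \<ge> N \<Longrightarrow> max 4 (16 * a) \<le> g t / t"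
    unfolding eventually_at_top_linorder by blast
  define v where "v = max N 1"
  have "v \<ge> 1" and "max 4 (16 * a) * v \<le> g v"
    using N[of v] by (auto simp: v_def le_divide_eq)
  moreover have "4 * 1 \<le> max 4 (16 * a) * v" and "16 * a * v \<le> max 4 (16 * a) * v"
    using \<open>v \<ge> 1\<close> by (intro mult_mono mult_right_mono; simp)+
  ultimately have "g v \<ge> 4" and "a * v \<le> g v / 16"
    by linarith+
  then have "(\<integral>\<^sup>+x. exp (a * \<bar>Y x\<bar>) \<partial>M) \<le> ennreal (exp (g v))"
    using \<open>v \<ge> 1\<close> \<open>a \<ge> 0\<close> by (intro nn_integral_exp_abs_le_exp_g_large[OF _ tail g_scale]) auto
  also have "\<dots> < \<infinity>"
    by simp
  finally show ?thesis
    by (intro integrableI_bounded) auto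
qed

lemma (in prob_space) nn_integral_exp_le_exp_sq:
  fixes Y :: "'a \<Rightarrow> real"
  assumes [measurable]: "Y \<in> borel_measurable M"
    and int_exp: "integrable M (\<lambda>x. exp (2 * \<bar>Y x\<bar>))"
    and "expectation Y = 0" and "\<bar>\<mu>\<bar> \<le> 1"
  shows "(\<integral>\<^sup>+x. exp (\<mu> * Y x) \<partial>M) \<le> exp (\<mu>\<^sup>2 * expectation (\<lambda>x. (Y x)\<^sup>2 * exp \<bar>Y x\<bar>))"
proof -
  have \<mu>Y: "\<bar>\<mu> * Y x\<bar> \<le> \<bar>Y x\<bar>" for x
    using \<open>\<bar>\<mu>\<bar> \<le> 1\<close> by (simp add: abs_mult mult_left_le_one_le)
  have sq_le: "(Y x)\<^sup>2 * exp \<bar>Y x\<bar> \<le> 2 * exp (2 * \<bar>Y x\<bar>)" for x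
  proof -
    have "(Y x)\<^sup>2 \<le> 2 * exp \<bar>Y x\<bar>"
      using exp_lower_Taylor_quadratic[of "\<bar>Y x\<bar>"] by simp
    then have "(Y x)\<^sup>2 * exp \<bar>Y x\<bar> \<le> 2 * exp \<bar>Y x\<bar> * exp \<bar>Y x\<bar>"
      by (rule mult_right_mono) simp
    then show ?thesis
      by (simp add: mult.assoc flip: exp_add)
  qed
  have "\<bar>Y x\<bar> \<le> exp (2 * \<bar>Y x\<bar>)" for x
    using exp_ge_add_one_self[of "2 * \<bar>Y x\<bar>"] by linarith
  then have int_Y: "integrable M Y"
    by (intro Bochner_Integration.integrable_bound[OF int_exp]) auto
  have "\<mu> * Y x \<le> 2 * \<bar>Y x\<bar>" for x
    using \<mu>Y[of x] abs_ge_self[of "\<mu> * Y x"] abs_ge_zero[of "Y x"] by linarith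
  then have int_exp_\<mu>: "integrable M (\<lambda>x. exp (\<mu> * Y x))"
    by (intro Bochner_Integration.integrable_bound[OF int_exp] AE_I2) simp_all
  have "integrable M (\<lambda>x. 2 * exp (2 * \<bar>Y x\<bar>))"
    using int_exp by simp
  then have int_sq: "integrable M (\<lambda>x. (Y x)\<^sup>2 * exp \<bar>Y x\<bar>)"
    by (rule Bochner_Integration.integrable_bound) (auto simp: abs_mult sq_le)
  have pointwise: "exp (\<mu> * Y x) \<le> 1 + \<mu> * Y x + \<mu>\<^sup>2 * ((Y x)\<^sup>2 * exp \<bar>Y x\<bar>)" for x
  proof -
    have "(\<mu> * Y x)\<^sup>2 * exp \<bar>\<mu> * Y x\<bar> \<le> \<mu>\<^sup>2 * ((Y x)\<^sup>2 * exp \<bar>Y x\<bar>)"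
      using \<mu>Y[of x] by (simp add: power_mult_distrib mult.assoc mult_left_mono)
    then show ?thesis
      using exp_upper_Taylor_quadratic[of "\<mu> * Y x"] by linarith
  qed
  have "expectation (\<lambda>x. exp (\<mu> * Y x))
      \<le> expectation (\<lambda>x. 1 + \<mu> * Y x + \<mu>\<^sup>2 * ((Y x)\<^sup>2 * exp \<bar>Y x\<bar>))"
    using int_exp_\<mu> int_Y int_sq pointwise by (intro integral_mono) auto
  also have "\<dots> = 1 + \<mu>\<^sup>2 * expectation (\<lambda>x. (Y x)\<^sup>2 * exp \<bar>Y x\<bar>)"
    using int_Y int_sq \<open>expectation Y = 0\<close> by (simp add: prob_space)
  also have "\<dots> \<le> exp (\<mu>\<^sup>2 * expectation (\<lambda>x. (Y x)\<^sup>2 * exp \<bar>Y x\<bar>))"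
    by (rule exp_ge_add_one_self)
  finally show ?thesis
    using int_exp_\<mu> by (simp add: nn_integral_eq_integral ennreal_leI)
qed

lemma (in prob_space) nn_integral_exp_le_exp_g:
  fixes Y :: "'a \<Rightarrow> real" and g :: "real \<Rightarrow> real"
  defines "K \<equiv> expectation (\<lambda>x. (Y x)\<^sup>2 * exp \<bar>Y x\<bar>)"
  assumes [measurable]: "Y \<in> borel_measurable M" and "expectation Y = 0"
    and int_exp: "integrable M (\<lambda>x. exp (2 * \<bar>Y x\<bar>))"
    and tail: "\<And>t. t \<ge> 0 \<Longrightarrow> prob {x\<in>space M. \<bar>Y x\<bar> > t} \<le> exp (- g t)"
    and g_nonneg: "\<And>t. t \<ge> 0 \<Longrightarrow> g t \<ge> 0"
    and g_scale: "\<And>k x. k \<ge> 1 \<Longrightarrow> x \<ge> 0 \<Longrightarrow> k * g x \<le> g (k * x)"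
    and g_quadratic: "\<And>v. v > 0 \<Longrightarrow> g v < 4 \<Longrightarrow> g v \<le> B * v\<^sup>2"
    and "C \<ge> 32" and C: "4 * B * (4 + K) \<le> C\<^sup>2"
    and "v > 0"
  shows "(\<integral>\<^sup>+x. exp (2 * g v / (C * v) * Y x) \<partial>M) \<le> exp (g v)"
proof -
  define \<mu> where "\<mu> = 2 * g v / (C * v)"
  have "g v \<ge> 0"
    using g_nonneg \<open>v > 0\<close> by simp
  then have "\<mu> \<ge> 0"
    using \<open>v > 0\<close> \<open>C \<ge> 32\<close> by (simp add: \<mu>_def)
  have "K \<ge> 0"
    unfolding K_def by (intro integral_nonneg_AE) auto
  show ?thesis
  proof (cases "g v \<ge> 4")
    case True
    have "\<mu> * v = 2 * g v / C"
      using \<open>v > 0\<close> by (simp add: \<mu>_def)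
    also have "\<dots> \<le> 2 * g v / 32"
      using \<open>C \<ge> 32\<close> \<open>g v \<ge> 0\<close> by (intro divide_left_mono) auto
    finally have "\<mu> * v \<le> g v / 16"
      by simp
    have "(\<integral>\<^sup>+x. exp (\<mu> * Y x) \<partial>M) \<le> (\<integral>\<^sup>+x. exp (\<mu> * \<bar>Y x\<bar>) \<partial>M)"
      using \<open>\<mu> \<ge> 0\<close> by (intro nn_integral_mono ennreal_leI) (simp add: mult_left_mono)
    also have "\<dots> \<le> exp (g v)"
      using \<open>v > 0\<close> True \<open>\<mu> \<ge> 0\<close> \<open>\<mu> * v \<le> g v / 16\<close>
        by (intro nn_integral_exp_abs_le_exp_g_large[OF _ tail g_scale]) auto
    finally show ?thesis
      unfolding \<mu>_def .
  next
    case False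
    have "\<mu>\<^sup>2 = 4 * g v * g v / (C\<^sup>2 * v\<^sup>2)"
      by (simp add: \<mu>_def power2_eq_square ac_simps)
    also have "\<dots> \<le> 4 * g v * (B * v\<^sup>2) / (C\<^sup>2 * v\<^sup>2)"
      using False \<open>v > 0\<close> \<open>g v \<ge> 0\<close> g_quadratic
      by (intro divide_right_mono mult_left_mono) auto
    also have "\<dots> = g v * (4 * B) / C\<^sup>2"
      using \<open>v > 0\<close> by (simp add: field_simps)
    finally have \<mu>_sq: "\<mu>\<^sup>2 \<le> g v * (4 * B) / C\<^sup>2" .
    have "0 \<le> B * v\<^sup>2"
      using g_quadratic[OF \<open>v > 0\<close>] False \<open>g v \<ge> 0\<close> by linarith
    then have "4 * B \<ge> 0"
      using \<open>v > 0\<close> by (simp add: zero_le_mult_iff)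
    have "\<mu>\<^sup>2 \<le> 1"
    proof -
      have "g v * (4 * B) \<le> 4 * (4 * B)"
        using False \<open>4 * B \<ge> 0\<close> by (intro mult_right_mono) auto
      also have "\<dots> \<le> C\<^sup>2"
        using C \<open>K \<ge> 0\<close> \<open>4 * B \<ge> 0\<close> mult_left_mono[of 4 "4 + K" "4 * B"] by linarith
      finally show ?thesis
        using \<mu>_sq \<open>C \<ge> 32\<close> by (simp add: divide_le_eq order_trans)
    qed
    then have "\<bar>\<mu>\<bar> \<le> 1"
      by (simp add: abs_square_le_1)
    have "\<mu>\<^sup>2 * K \<le> g v"
    proof -
      have "\<mu>\<^sup>2 * K \<le> g v * (4 * B) / C\<^sup>2 * K"
        using \<mu>_sq \<open>K \<ge> 0\<close> by (rule mult_right_mono)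
      also have "\<dots> = g v * (4 * B * K / C\<^sup>2)"
        by simp
      also have "\<dots> \<le> g v * 1"
        using C \<open>C \<ge> 32\<close> \<open>4 * B \<ge> 0\<close> \<open>g v \<ge> 0\<close>
        by (intro mult_left_mono) (simp_all add: divide_le_eq algebra_simps)
      finally show ?thesis by simp
    qed
    have "(\<integral>\<^sup>+x. exp (\<mu> * Y x) \<partial>M) \<le> exp (\<mu>\<^sup>2 * K)"
      unfolding K_def using \<open>expectation Y = 0\<close> \<open>\<bar>\<mu>\<bar> \<le> 1\<close>
        by (intro nn_integral_exp_le_exp_sq[OF _ int_exp]) auto
    also have "\<dots> \<le> exp (g v)"
      using \<open>\<mu>\<^sup>2 * K \<le> g v\<close> by (intro ennreal_leI) simp
    finally show ?thesis
      unfolding \<mu>_def .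
  qed
qed

lemma (in prob_space) exists_mgf_le_exp_g:
  fixes Y :: "'a \<Rightarrow> real" and g :: "real \<Rightarrow> real"
  assumes [measurable]: "Y \<in> borel_measurable M" and "expectation Y = 0"
    and tail: "\<And>t. t \<ge> 0 \<Longrightarrow> prob {x\<in>space M. \<bar>Y x\<bar> > t} \<le> exp (- g t)"
    and g_nonneg: "\<And>t. t \<ge> 0 \<Longrightarrow> g t \<ge> 0"
    and g_scale: "\<And>k x. k \<ge> 1 \<Longrightarrow> x \<ge> 0 \<Longrightarrow> k * g x \<le> g (k * x)"
    and g_super: "filterlim (\<lambda>t. g t / t) at_top at_top"
    and g_quadratic: "\<And>v. v > 0 \<Longrightarrow> g v < 4 \<Longrightarrow> g v \<le> B * v\<^sup>2"
  shows "\<exists>C>0. \<forall>\<sigma> v. \<bar>\<sigma>\<bar> = 1 \<and> v > 0 \<longrightarrow>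
    (\<integral>\<^sup>+x. exp (2 * g v / (C * v) * (\<sigma> * Y x)) \<partial>M) \<le> exp (g v)"
proof -
  define K where "K = expectation (\<lambda>x. (Y x)\<^sup>2 * exp \<bar>Y x\<bar>)"
  define C where "C = 32 + 2 * sqrt (\<bar>B\<bar> * (4 + K))"
  have int_exp: "integrable M (\<lambda>x. exp (2 * \<bar>Y x\<bar>))"
    by (rule integrable_exp_abs[OF _ tail g_scale g_super]) auto
  have "K \<ge> 0"
    unfolding K_def by (intro integral_nonneg_AE) auto
  then have "4 * B * (4 + K) \<le> (2 * sqrt (\<bar>B\<bar> * (4 + K)))\<^sup>2"
    by (simp add: power_mult_distrib mult_right_mono)
  also have "\<dots> \<le> C\<^sup>2"
    using \<open>K \<ge> 0\<close> unfolding C_def by (intro power_mono) auto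
  finally have C: "4 * B * (4 + K) \<le> C\<^sup>2" .
  have "(\<integral>\<^sup>+x. exp (2 * g v / (C * v) * (\<sigma> * Y x)) \<partial>M) \<le> exp (g v)"
    if "\<bar>\<sigma>\<bar> = 1" "v > 0" for \<sigma> v
  proof (rule nn_integral_exp_le_exp_g[OF _ _ _ _ g_nonneg g_scale g_quadratic])
    have "\<sigma>\<^sup>2 = 1"
      by (metis \<open>\<bar>\<sigma>\<bar> = 1\<close> power2_abs one_power2)
    then have [simp]: "\<bar>\<sigma> * Y x\<bar> = \<bar>Y x\<bar>" "(\<sigma> * Y x)\<^sup>2 = (Y x)\<^sup>2" for x
      using \<open>\<bar>\<sigma>\<bar> = 1\<close> by (simp_all add: abs_mult power_mult_distrib)
    show "4 * B * (4 + expectation (\<lambda>x. (\<sigma> * Y x)\<^sup>2 * exp \<bar>\<sigma> * Y x\<bar>)) \<le> C\<^sup>2"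
      using C by (simp add: K_def)
    show "expectation (\<lambda>x. \<sigma> * Y x) = 0"
      using \<open>expectation Y = 0\<close> by simp
    show "integrable M (\<lambda>x. exp (2 * \<bar>\<sigma> * Y x\<bar>))"
      using int_exp by simp
    show "prob {x \<in> space M. \<bar>\<sigma> * Y x\<bar> > t} \<le> exp (- g t)" if "t \<ge> 0" for t
      using tail[OF that] by simp
  qed (use \<open>v > 0\<close> \<open>K \<ge> 0\<close> in \<open>auto simp: C_def\<close>)
  moreover have "C > 0"
    using \<open>K \<ge> 0\<close> by (simp add: C_def add_pos_nonneg)
  ultimately show ?thesis by blast
qed

lemma nn_integral_eq_if_distr_eq:
  assumes X: "X \<in> measurable M N" and Y: "Y \<in> measurable M N" and distr: "distr M N X = distr M N Y"
    and f: "f \<in> borel_measurable N"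
  shows "(\<integral>\<^sup>+x. f (X x) \<partial>M) = (\<integral>\<^sup>+x. f (Y x) \<partial>M)"
proof -
  have "(\<integral>\<^sup>+x. f (X x) \<partial>M) = (\<integral>\<^sup>+y. f y \<partial>distr M N X)"
    using X f by (simp add: nn_integral_distr)
  also have "\<dots> = (\<integral>\<^sup>+x. f (Y x) \<partial>M)"
    unfolding distr using Y f by (simp add: nn_integral_distr)
  finally show ?thesis .
qed

lemma (in prob_space) indep_sum_Chernoff:
  fixes Y :: "'i \<Rightarrow> 'a \<Rightarrow> real"
  assumes "finite I" and indep: "indep_vars (\<lambda>_. borel) Y I" and "s > 0"
  shows "emeasure M {x\<in>space M. a \<le> (\<Sum>i\<in>I. Y i x)}
    \<le> exp (- s * a) * (\<Prod>i\<in>I. \<integral>\<^sup>+x. exp (s * Y i x) \<partial>M)"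
proof -
  have [measurable]: "Y i \<in> borel_measurable M" if "i \<in> I" for i
    using indep that unfolding indep_vars_def by blast
  have "emeasure M {x\<in>space M. a \<le> (\<Sum>i\<in>I. Y i x)}
      \<le> exp (- s * a) * (\<integral>\<^sup>+x. ennreal (exp (s * (\<Sum>i\<in>I. Y i x))) * indicator (space M) x \<partial>M)"
    using \<open>s > 0\<close> by (intro Chernoff_ineq_nn_integral_ge) auto
  also have "(\<integral>\<^sup>+x. ennreal (exp (s * (\<Sum>i\<in>I. Y i x))) * indicator (space M) x \<partial>M)
      = (\<integral>\<^sup>+x. (\<Prod>i\<in>I. ennreal (exp (s * Y i x))) \<partial>M)"
    using \<open>finite I\<close> by (intro nn_integral_cong) (simp add: sum_distrib_left exp_sum prod_ennreal)
  also have "\<dots> = (\<Prod>i\<in>I. \<integral>\<^sup>+x. exp (s * Y i x) \<partial>M)"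
    using \<open>finite I\<close> by (intro indep_vars_nn_integral indep_vars_compose2[OF indep]) auto
  finally show ?thesis .
qed

lemma (in prob_space) normalized_iid_sum_tail_le:
  fixes X :: "nat \<Rightarrow> 'a \<Rightarrow> real" and g :: "real \<Rightarrow> real"
  assumes rv: "\<And>i. i \<ge> 1 \<Longrightarrow> X i \<in> borel_measurable M"
    and indep: "indep_vars (\<lambda>_. borel) X {1..}"
    and ident: "\<And>i. i \<ge> 1 \<Longrightarrow> distr M borel (X i) = distr M borel (X 1)"
    and g_pos: "\<And>t. t > 0 \<Longrightarrow> g t > 0"
    and "C > 0"
    and mgf: "\<And>v. v > 0 \<Longrightarrow> (\<integral>\<^sup>+x. exp (2 * g v / (C * v) * (\<sigma> * X 1 x)) \<partial>M) \<le> exp (g v)"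
    and "n \<ge> 1" and "t > 0"
  shows "prob {x\<in>space M. \<sigma> * ((\<Sum>i=1..n. X i x) / sqrt n) > t} \<le> exp (- n * g (t / (C * sqrt n)))"
proof -
  define v where "v = t / (C * sqrt n)"
  define \<mu> where "\<mu> = 2 * g v / (C * v)"
  have "sqrt n > 0" and "v > 0"
    using \<open>n \<ge> 1\<close> \<open>t > 0\<close> \<open>C > 0\<close> by (auto simp: v_def)
  then have "\<mu> > 0"
    using g_pos \<open>C > 0\<close> by (simp add: \<mu>_def)
  have \<mu>_t: "\<mu> * (t * sqrt n) = 2 * n * g v"
    using \<open>sqrt n > 0\<close> \<open>C > 0\<close> \<open>t > 0\<close> by (simp add: \<mu>_def v_def field_simps)
  have [measurable]: "X i \<in> borel_measurable M" if "i \<in> {1..n}" for i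
    using rv that by simp
  have "{x\<in>space M. \<sigma> * ((\<Sum>i=1..n. X i x) / sqrt n) > t}
      \<subseteq> {x\<in>space M. t * sqrt n \<le> (\<Sum>i=1..n. \<sigma> * X i x)}"
    using \<open>sqrt n > 0\<close> by (auto simp: sum_distrib_left field_simps)
  then have "emeasure M {x\<in>space M. \<sigma> * ((\<Sum>i=1..n. X i x) / sqrt n) > t}
      \<le> emeasure M {x\<in>space M. t * sqrt n \<le> (\<Sum>i=1..n. \<sigma> * X i x)}"
    by (intro emeasure_mono) measurable
  also have "\<dots> \<le> exp (- \<mu> * (t * sqrt n)) * (\<Prod>i=1..n. \<integral>\<^sup>+x. exp (\<mu> * (\<sigma> * X i x)) \<partial>M)"
  proof (rule indep_sum_Chernoff)
    show "indep_vars (\<lambda>_. borel) (\<lambda>i x. \<sigma> * X i x) {1..n}"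
      using indep_vars_subset[OF indep, of "{1..n}"] by (intro indep_vars_compose2[where Y="\<lambda>i z. \<sigma> * z"]) auto
  qed (use \<open>\<mu> > 0\<close> in auto)
  also have "(\<Prod>i=1..n. \<integral>\<^sup>+x. exp (\<mu> * (\<sigma> * X i x)) \<partial>M)
      = (\<integral>\<^sup>+x. exp (\<mu> * (\<sigma> * X 1 x)) \<partial>M) ^ n"
  proof -
    have "(\<Prod>i=1..n. \<integral>\<^sup>+x. exp (\<mu> * (\<sigma> * X i x)) \<partial>M)
        = (\<Prod>i=1..n. \<integral>\<^sup>+x. exp (\<mu> * (\<sigma> * X 1 x)) \<partial>M)"
      by (rule prod.cong[OF refl], rule nn_integral_eq_if_distr_eq[OF rv rv ident]) auto
    then show ?thesis
      by simp
  qed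
  also have "ennreal (exp (- \<mu> * (t * sqrt n))) * (\<integral>\<^sup>+x. exp (\<mu> * (\<sigma> * X 1 x)) \<partial>M) ^ n
      \<le> ennreal (exp (- \<mu> * (t * sqrt n))) * ennreal (exp (g v)) ^ n"
    using mgf[OF \<open>v > 0\<close>] by (intro mult_left_mono power_mono) (auto simp: \<mu>_def)
  also have "\<dots> = exp (- n * g v)"
    by (simp add: \<mu>_t ennreal_power flip: ennreal_mult exp_of_nat_mult exp_add)
  finally show ?thesis
    by (simp add: v_def emeasure_eq_measure)
qed

lemma (in prob_space) two_sided_tail_le:
  fixes S :: "'a \<Rightarrow> real"
  assumes [measurable]: "S \<in> borel_measurable M"
    and "prob {x\<in>space M. S x > t} \<le> b" and "prob {x\<in>space M. - S x > t} \<le> b"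
  shows "max (prob {x\<in>space M. S x > t}) (prob {x\<in>space M. S x < - t}) \<le> b
    \<and> prob {x\<in>space M. \<bar>S x\<bar> > t} \<le> 2 * b"
proof -
  have lower: "{x\<in>space M. - S x > t} = {x\<in>space M. S x < - t}"
    by auto
  have "{x\<in>space M. \<bar>S x\<bar> > t} \<subseteq> {x\<in>space M. S x > t} \<union> {x\<in>space M. S x < - t}"
    by (auto simp: abs_real_def split: if_splits)
  then have "prob {x\<in>space M. \<bar>S x\<bar> > t} \<le> prob ({x\<in>space M. S x > t} \<union> {x\<in>space M. S x < - t})"
    by (rule finite_measure_mono) measurable
  also have "\<dots> \<le> prob {x\<in>space M. S x > t} + prob {x\<in>space M. S x < - t}"
    by (intro measure_Un_le) auto
  finally show ?thesis
    using assms(2,3) unfolding lower by simp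
qed

theorem theorem1p1:
  fixes M :: "'a measure" and X :: "nat \<Rightarrow> 'a \<Rightarrow> real" and g :: "real \<Rightarrow> real"
  assumes ps: "prob_space M"
    and rv: "\<And>i. i \<ge> 1 \<Longrightarrow> X i \<in> borel_measurable M"
    and indep: "prob_space.indep_vars M (\<lambda>_. borel) X {1..}"
    and ident: "\<And>i. i \<ge> 1 \<Longrightarrow> distr M borel (X i) = distr M borel (X 1)"
    and sq_int: "integrable M (\<lambda>x. (X 1 x)\<^sup>2)"
    and centered: "prob_space.expectation M (X 1) = 0"
    and var_nz: "prob_space.variance M (X 1) \<noteq> 0"
    and g_range: "\<And>t. t \<ge> 0 \<Longrightarrow> g t \<ge> 0"
    and g_cont: "continuous_on {0..} g"
    and g_sconv: "strict_convex_on {0..} g"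
    and g_pos: "\<And>t. t > 0 \<Longrightarrow> g t > 0"
    and g_super: "filterlim (\<lambda>t. g t / t) at_top at_top"
    and g0: "g 0 = 0"
    and g_deriv: "\<exists>\<delta>>0. \<exists>g' c.
        (\<forall>t\<in>{0..<\<delta>}. (g has_real_derivative g' t) (at t within {0..}))
        \<and> g' 0 = 0 \<and> (g' has_real_derivative c) (at 0 within {0..}) \<and> 0 < c"
    and tail: "\<And>t. t \<ge> 0 \<Longrightarrow>
        measure M {x \<in> space M. \<bar>X 1 x\<bar> > t} \<le> exp (- g t)"
  shows "\<exists>C1>0. \<forall>n::nat. \<forall>t::real. n \<ge> 1 \<and> t > 0 \<longrightarrow>
      (let S = (\<lambda>x. (\<Sum>i=1..n. X i x) / sqrt (real n));
           B = exp (- real n * g (t / (C1 * sqrt (real n))))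
       in max (measure M {x \<in> space M. S x > t}) (measure M {x \<in> space M. S x < - t}) \<le> B
          \<and> measure M {x \<in> space M. \<bar>S x\<bar> > t} \<le> 2 * B)"
proof -
  interpret prob_space M by (rule ps)
  have g_scale: "\<And>k x. k \<ge> 1 \<Longrightarrow> x \<ge> 0 \<Longrightarrow> k * g x \<le> g (k * x)"
    using strict_convex_on_scale_ge[OF g_sconv g0] by blast
  obtain \<delta> g' c where "\<delta> > 0"
    and g_deriv': "\<And>t. t \<in> {0..<\<delta>} \<Longrightarrow> (g has_real_derivative g' t) (at t within {0..})"
    and g'_deriv: "(g' has_real_derivative c) (at 0 within {0..})" and "g' 0 = 0"
    using g_deriv by blast
  then obtain d B where "d > 0" and near_zero: "\<And>v. 0 < v \<Longrightarrow> v < d \<Longrightarrow> g v \<le> B * v\<^sup>2"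
    using quadratic_bound_near_zero[OF \<open>\<delta> > 0\<close> g_deriv' g'_deriv g0] by blast
  have g_quadratic: "\<And>v. v > 0 \<Longrightarrow> g v < 4 \<Longrightarrow> g v \<le> max B (4 / d\<^sup>2) * v\<^sup>2"
    using quadratic_bound_below_level[OF \<open>d > 0\<close> near_zero] by simp
  obtain C where "C > 0" and mgf: "\<forall>\<sigma> v. \<bar>\<sigma>\<bar> = 1 \<and> v > 0 \<longrightarrow>
      (\<integral>\<^sup>+x. exp (2 * g v / (C * v) * (\<sigma> * X 1 x)) \<partial>M) \<le> exp (g v)"
    using exists_mgf_le_exp_g[OF rv[of 1] centered tail g_range g_scale g_super g_quadratic] by auto
  define S where "S n x = (\<Sum>i=1..n. X i x) / sqrt n" for n :: nat and x
  have [measurable]: "S n \<in> borel_measurable M" for n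
    unfolding S_def using rv by measurable
  have one_sided: "prob {x\<in>space M. \<sigma> * S n x > t} \<le> exp (- n * g (t / (C * sqrt n)))"
    if "\<bar>\<sigma>\<bar> = 1" "n \<ge> 1" "t > 0" for \<sigma> n t
    unfolding S_def using mgf that by (intro normalized_iid_sum_tail_le[OF rv indep ident g_pos \<open>C > 0\<close>]) auto
  have "max (prob {x\<in>space M. S n x > t}) (prob {x\<in>space M. S n x < - t}) \<le> exp (- n * g (t / (C * sqrt n)))
      \<and> prob {x\<in>space M. \<bar>S n x\<bar> > t} \<le> 2 * exp (- n * g (t / (C * sqrt n)))"
    if "n \<ge> 1" "t > 0" for n t
    using one_sided[of 1 n t] one_sided[of "-1" n t] that by (intro two_sided_tail_le) simp_all
  then show ?thesis
    unfolding Let_def S_def using \<open>C > 0\<close> by blast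
qed

end
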